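(* Let $n\neq 0,-1$ be an integer and $M$ the graph manifold obtained by $4$-surgery along the $n$-twist knot $K_n$, decomposed along an incompressible torus as $M=E_{T(2,2n+1)}\cup N(Kb)$. Then for every irreducible representation $\bar\rho:\pi_1(M)\to SL(2,\mathbb{C})$, the restriction of $\bar\rho$ to $\pi_1(E_{T(2,2n+1)})$ is abelian.
   Context: The $n$-twist knot $K_n$ is the two-bridge knot whose group has the presentation $\pi_1(E_{K_n})=\langle \alpha,\beta\mid \omega^n\alpha=\beta\omega^n\rangle$ with $\alpha,\beta$ meridians and $\omega=\beta\alpha^{-1}\beta^{-1}\alpha$; its Alexander polynomial is $-nt^2+(2n+1)t-n$, and $K_1$ is the figure-eight knot. $E_K$ denotes a knot exterior, $T(2,2n+1)$ the torus knot of type $(2,2n+1)$, and $N(Kb)$ the twisted $I$-bundle over the Klein bottle. The manifold $M$ obtained by $4$-surgery along $K_n$ is the union of $E_{T(2,2n+1)}$ and $N(Kb)$ along a torus, with $\pi_1(M)=\langle a,b,x,y\mid a^2=b^{2n+1},\ x^{-1}yx=y^{-1},\ \mu=y^{-1},\ h=y^{-1}x^2\rangle$, where $\pi_1(E_{T(2,2n+1)})=\langle a,b\mid a^2=b^{2n+1}\rangle$, $\pi_1(N(Kb))=\langle x,y\mid x^{-1}yx=y^{-1}\rangle$, $\mu=b^{-n}a$ is a meridian and $h$ a regular fiber of the torus knot exterior. A representation is irreducible if the only subspaces of $\mathbb{C}^2$ invariant under its image are $\{0\}$ and $\mathbb{C}^2$; abelian if its image is abelian. *)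

theory Defs
  imports "HOL-Analysis.Analysis"
begin

type_synonym cmat2 = "complex^2^2"

fun mpow :: "cmat2 \<Rightarrow> nat \<Rightarrow> cmat2" where
  "mpow A 0 = mat 1"
| "mpow A (Suc k) = A ** mpow A k"

definition mzpow :: "cmat2 \<Rightarrow> int \<Rightarrow> cmat2" where
  "mzpow A k = (if 0 \<le> k then mpow A (nat k) else mpow (matrix_inv A) (nat (- k)))"

definition SL2 :: "cmat2 set" where
  "SL2 = {A. det A = 1}"

inductive_set gen_grp :: "cmat2 set \<Rightarrow> cmat2 set" for S where
  one: "mat 1 \<in> gen_grp S"
| gen: "g \<in> S \<Longrightarrow> g \<in> gen_grp S"
| inv: "g \<in> S \<Longrightarrow> matrix_inv g \<in> gen_grp S"
| mult: "g \<in> gen_grp S \<Longrightarrow> h \<in> gen_grp S \<Longrightarrow> g ** h \<in> gen_grp S"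

definition csubspace2 :: "(complex^2) set \<Rightarrow> bool" where
  "csubspace2 W \<longleftrightarrow> 0 \<in> W \<and> (\<forall>v\<in>W. \<forall>w\<in>W. v + w \<in> W) \<and> (\<forall>c. \<forall>v\<in>W. c *s v \<in> W)"

definition irreducible_set :: "cmat2 set \<Rightarrow> bool" where
  "irreducible_set G \<longleftrightarrow> (\<forall>W. csubspace2 W \<and> (\<forall>g\<in>G. \<forall>v\<in>W. g *v v \<in> W)
                           \<longrightarrow> W = {0} \<or> W = UNIV)"

definition abelian_set :: "cmat2 set \<Rightarrow> bool" where
  "abelian_set G \<longleftrightarrow> (\<forall>g\<in>G. \<forall>h\<in>G. g ** h = h ** g)"

text \<open>Representations of pi_1(M) = <a,b,x,y | a^2=b^(2n+1), x^-1 y x = y^-1, mu = y^-1, h = y^-1 x^2>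
  with mu = b^-n a and h = a^2 (the regular fiber), given by the images (A,B,X,Y) of the generators.\<close>
definition rep_M :: "int \<Rightarrow> cmat2 \<Rightarrow> cmat2 \<Rightarrow> cmat2 \<Rightarrow> cmat2 \<Rightarrow> bool" where
  "rep_M n A B X Y \<longleftrightarrow> A \<in> SL2 \<and> B \<in> SL2 \<and> X \<in> SL2 \<and> Y \<in> SL2
     \<and> mzpow A 2 = mzpow B (2*n+1)
     \<and> matrix_inv X ** Y ** X = matrix_inv Y
     \<and> mzpow B (-n) ** A = matrix_inv Y
     \<and> mzpow A 2 = matrix_inv Y ** mzpow X 2"

end

theory Submission
  imports Defs
begin

text \<open>The regular fiber \<open>h = a\<^sup>2\<close> is central in the torus knot group, so \<open>\<rho>(a)\<^sup>2\<close> commutes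
  with \<open>\<rho>(a)\<close> and \<open>\<rho>(b)\<close>. If \<open>\<rho>(a)\<^sup>2\<close> is not scalar, its centralizer in the
  \<open>2\<times>2\<close> matrices is commutative, and we are done. If it is scalar, the gluing \<open>h = y\<^sup>-\<^sup>1x\<^sup>2\<close>
  makes \<open>\<rho>(x)\<^sup>2\<close> a multiple of \<open>\<rho>(y)\<close>, so \<open>\<rho>(x)\<close> commutes with \<open>\<rho>(y)\<close>; the Klein bottle
  relation then gives \<open>\<rho>(y) = \<rho>(y)\<^sup>-\<^sup>1\<close>, hence \<open>\<rho>(y) = \<plusminus>1\<close>, and the gluing \<open>\<mu> = y\<^sup>-\<^sup>1\<close>
  makes \<open>\<rho>(b)\<^sup>-\<^sup>n\<rho>(a)\<close> scalar, so again \<open>\<rho>(a)\<close> commutes with \<open>\<rho>(b)\<close>.\<close>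

lemma matrix_inv_right_left:
  fixes M :: "'a::semiring_1^'n^'n"
  assumes "invertible M"
  shows matrix_inv_right: "M ** matrix_inv M = mat 1"
    and matrix_inv_left: "matrix_inv M ** M = mat 1"
proof -
  have "M ** matrix_inv M = mat 1 \<and> matrix_inv M ** M = mat 1"
    using assms unfolding invertible_def matrix_inv_def by (rule someI_ex)
  then show "M ** matrix_inv M = mat 1" "matrix_inv M ** M = mat 1" by auto
qed

lemma invertible_matrix_inv:
  fixes M :: "'a::semiring_1^'n^'n"
  assumes "invertible M"
  shows "invertible (matrix_inv M)"
  using matrix_inv_right_left[OF assms] unfolding invertible_def by blast

lemma matrix_left_cancel:
  fixes K M N :: "'a::semiring_1^'n^'n"
  assumes "invertible K" "K ** M = K ** N"
  shows "M = N"
  by (metis assms matrix_inv_left matrix_mul_assoc matrix_mul_lid)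

lemma mat_matrix_mult:
  fixes M :: "'a::semiring_1^'m^'n"
  shows "mat c ** M = (\<chi> i j. c * M$i$j)"
  unfolding matrix_matrix_mult_def mat_def
  by (auto simp: if_distrib if_distribR sum.delta'[OF finite] cong: if_cong)

lemma matrix_mat_mult:
  fixes M :: "'a::semiring_1^'m^'n"
  shows "M ** mat c = (\<chi> i j. M$i$j * c)"
  unfolding matrix_matrix_mult_def mat_def
  by (auto simp: if_distrib if_distribR sum.delta[OF finite] cong: if_cong)

lemma mat_commute:
  fixes M :: "'a::comm_semiring_1^'n^'n"
  shows "mat c ** M = M ** mat c"
  by (simp add: mat_matrix_mult matrix_mat_mult mult.commute)

lemma mat_mult_mat: "(mat a :: 'a::semiring_1^'n^'n) ** mat b = mat (a * b)"
  unfolding mat_matrix_mult by (simp add: vec_eq_iff mat_def)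

lemma invertible_mat:
  fixes c :: "'a::field"
  assumes "c \<noteq> 0"
  shows "invertible (mat c :: 'a^'n^'n)"
proof -
  have "mat c ** mat (inverse c) = (mat 1 :: 'a^'n^'n)" "mat (inverse c) ** mat c = (mat 1 :: 'a^'n^'n)"
    using assms by (simp_all add: mat_mult_mat)
  then show ?thesis unfolding invertible_def by blast
qed

lemma matrix_inv_commute:
  fixes M B :: "'a::semiring_1^'n^'n"
  assumes "invertible M" "M ** B = B ** M"
  shows "matrix_inv M ** B = B ** matrix_inv M"
proof -
  have "M ** (matrix_inv M ** B) = B"
    using matrix_inv_right[OF assms(1)] by (simp add: matrix_mul_assoc)
  also have "\<dots> = M ** (B ** matrix_inv M)"
    using assms(2) matrix_inv_right[OF assms(1)] by (metis matrix_mul_assoc matrix_mul_rid)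
  finally show ?thesis using matrix_left_cancel[OF assms(1)] by blast
qed

lemma mpow_commute:
  assumes "M ** B = B ** M"
  shows "mpow M k ** B = B ** mpow M k"
  by (induction k) (simp_all, metis assms matrix_mul_assoc)

lemma mzpow_commute:
  assumes "invertible M" "M ** B = B ** M"
  shows "mzpow M k ** B = B ** mzpow M k"
  unfolding mzpow_def
  using mpow_commute[OF assms(2)] mpow_commute[OF matrix_inv_commute[OF assms]] by simp

lemma invertible_mpow:
  assumes "invertible M"
  shows "invertible (mpow M k)"
  by (induction k) (simp_all add: invertible_mult assms, simp add: invertible_def)

lemma invertible_mzpow:
  assumes "invertible M"
  shows "invertible (mzpow M k)"
  unfolding mzpow_def
  using invertible_mpow[OF assms] invertible_mpow[OF invertible_matrix_inv[OF assms]] by simp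

lemma mzpow_2: "mzpow M 2 = M ** M"
  by (simp add: mzpow_def eval_nat_numeral)

lemma matrix_eq_2x2_iff:
  fixes A B :: "'a^2^2"
  shows "A = B \<longleftrightarrow> A$1$1 = B$1$1 \<and> A$1$2 = B$1$2 \<and> A$2$1 = B$2$1 \<and> A$2$2 = B$2$2"
  by (auto simp: vec_eq_iff forall_2)

lemma matrix_mult_2x2_nth:
  fixes A B :: "'a::semiring_1^2^2"
  shows "(A ** B)$i$j = A$i$1 * B$1$j + A$i$2 * B$2$j"
  by (simp add: matrix_matrix_mult_def sum_2)

text \<open>Multiplied by a nonzero off-diagonal entry of \<open>M\<close>, or by \<open>M$1$1 - M$2$2\<close> when \<open>M\<close>
  is diagonal, each entry of \<open>AB - BA\<close> lies in the ideal generated by the entries of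
  \<open>AM - MA\<close> and \<open>BM - MB\<close>.\<close>
lemma commute_of_commute_nonscalar_2x2:
  fixes A B M :: "'a::field^2^2"
  assumes "\<nexists>c. M = mat c" "A ** M = M ** A" "B ** M = M ** B"
  shows "A ** B = B ** A"
proof -
  have a: "A$1$2 * M$2$1 = M$1$2 * A$2$1"
      "A$1$1 * M$1$2 + A$1$2 * M$2$2 = M$1$1 * A$1$2 + M$1$2 * A$2$2"
      "A$2$1 * M$1$1 + A$2$2 * M$2$1 = M$2$1 * A$1$1 + M$2$2 * A$2$1"
   and b: "B$1$2 * M$2$1 = M$1$2 * B$2$1"
      "B$1$1 * M$1$2 + B$1$2 * M$2$2 = M$1$1 * B$1$2 + M$1$2 * B$2$2"
      "B$2$1 * M$1$1 + B$2$2 * M$2$1 = M$2$1 * B$1$1 + M$2$2 * B$2$1"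
    using assms(2,3) by (simp_all add: matrix_eq_2x2_iff matrix_mult_2x2_nth)
  let ?c12 = "A$1$2 * B$2$1 - B$1$2 * A$2$1"
  let ?c11 = "A$1$1 * B$1$2 + A$1$2 * B$2$2 - (B$1$1 * A$1$2 + B$1$2 * A$2$2)"
  let ?c21 = "A$2$1 * B$1$1 + A$2$2 * B$2$1 - (B$2$1 * A$1$1 + B$2$2 * A$2$1)"
  have "?c12 = 0 \<and> ?c11 = 0 \<and> ?c21 = 0"
  proof -
    have "M$1$2 \<noteq> 0 \<or> M$2$1 \<noteq> 0 \<or> M$1$1 \<noteq> M$2$2"
      using assms(1) by (auto simp: matrix_eq_2x2_iff mat_def)
    then consider "M$1$2 \<noteq> 0" | "M$2$1 \<noteq> 0" | "M$1$2 = 0" "M$2$1 = 0" "M$1$1 \<noteq> M$2$2"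
      by blast
    then show ?thesis
    proof cases
      case 1
      have "M$1$2 * ?c12 = 0" "M$1$2 * ?c11 = 0" "M$1$2 * (M$1$2 * ?c21) = 0"
        using a b by algebra+
      then show ?thesis using 1 by simp
    next
      case 2
      have "M$2$1 * ?c12 = 0" "M$2$1 * (M$2$1 * ?c11) = 0" "M$2$1 * ?c21 = 0"
        using a b by algebra+
      then show ?thesis using 2 by simp
    next
      case 3
      have "(M$1$1 - M$2$2) * A$1$2 = 0" "(M$1$1 - M$2$2) * A$2$1 = 0"
        "(M$1$1 - M$2$2) * B$1$2 = 0" "(M$1$1 - M$2$2) * B$2$1 = 0"
        using a b 3 by algebra+
      then show ?thesis using 3 by simp
    qed
  qed
  then show ?thesis
    by (simp add: matrix_eq_2x2_iff matrix_mult_2x2_nth algebra_simps)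
qed

lemma scalar_of_involution_det_one:
  fixes Y :: "'a::field_char_0^2^2"
  assumes "Y ** Y = mat 1" "det Y = 1"
  shows "\<exists>d. Y = mat d"
proof -
  have sq: "Y$1$1 * Y$1$1 + Y$1$2 * Y$2$1 = 1" "Y$1$1 * Y$1$2 + Y$1$2 * Y$2$2 = 0"
      "Y$2$1 * Y$1$1 + Y$2$2 * Y$2$1 = 0" "Y$2$1 * Y$1$2 + Y$2$2 * Y$2$2 = 1"
    using assms(1) by (simp_all add: matrix_eq_2x2_iff matrix_mult_2x2_nth mat_def)
  have det: "Y$1$1 * Y$2$2 - Y$1$2 * Y$2$1 = 1" using assms(2) by (simp add: det_2)
  have tr: "Y$1$1 + Y$2$2 \<noteq> 0"
  proof
    assume "Y$1$1 + Y$2$2 = 0"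
    then have "(2::'a) = 0" using sq(1) det by algebra
    then show False by simp
  qed
  have "Y$1$2 * (Y$1$1 + Y$2$2) = 0" "Y$2$1 * (Y$1$1 + Y$2$2) = 0"
    "(Y$1$1 - Y$2$2) * (Y$1$1 + Y$2$2) = 0"
    using sq by algebra+
  then have "Y = mat (Y$1$1)" using tr by (simp add: matrix_eq_2x2_iff mat_def)
  then show ?thesis by blast
qed

lemma commute_of_square_eq_scalar_mult:
  fixes X Y :: "'a::field^'n^'n"
  assumes "X ** X = Y ** mat c" "c \<noteq> 0"
  shows "X ** Y = Y ** X"
proof -
  have "mat c ** (X ** Y) = X ** (Y ** mat c)"
    unfolding mat_commute[of c "X ** Y"] by (simp add: matrix_mul_assoc)
  also have "\<dots> = X ** (X ** X)"
    using assms(1) by simp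
  also have "\<dots> = (X ** X) ** X"
    by (simp add: matrix_mul_assoc)
  also have "\<dots> = Y ** (mat c ** X)"
    using assms(1) by (simp add: matrix_mul_assoc)
  also have "\<dots> = Y ** (X ** mat c)"
    by (simp only: mat_commute[of c X])
  also have "\<dots> = mat c ** (Y ** X)"
    unfolding mat_commute[of c "Y ** X"] by (simp add: matrix_mul_assoc)
  finally show ?thesis
    using matrix_left_cancel[OF invertible_mat[OF assms(2)]] by blast
qed

lemma scalar_of_klein_bottle_relation:
  fixes X Y :: "'a::field_char_0^2^2"
  assumes "invertible X" "det Y = 1"
    and "matrix_inv X ** Y ** X = matrix_inv Y"
    and "X ** Y = Y ** X"
  shows "\<exists>d. Y = mat d"
proof -
  have "matrix_inv Y = matrix_inv X ** (Y ** X)"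
    using assms(3) by (simp add: matrix_mul_assoc)
  also have "\<dots> = (matrix_inv X ** X) ** Y"
    by (simp only: assms(4)[symmetric] matrix_mul_assoc)
  also have "\<dots> = Y" using matrix_inv_left[OF assms(1)] by simp
  finally have "matrix_inv Y = Y" .
  moreover have "invertible Y"
    using assms(2) by (simp add: invertible_det_nz)
  ultimately have "Y ** Y = mat 1"
    using matrix_inv_right[of Y] by simp
  then show ?thesis using scalar_of_involution_det_one assms(2) by blast
qed

lemma gen_grp_commute:
  assumes "\<forall>s\<in>S. invertible s" "\<forall>s\<in>S. s ** h = h ** s" "g \<in> gen_grp S"
  shows "g ** h = h ** g"
  using assms(3)
proof (induction rule: gen_grp.induct)
  case one
  then show ?case by simp
next
  case (gen g)
  then show ?case using assms(2) by blast
next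
  case (inv g)
  then show ?case using assms(1,2) by (simp add: matrix_inv_commute)
next
  case (mult g g')
  have "g ** g' ** h = g ** (h ** g')" using mult.IH(2) by (simp add: matrix_mul_assoc[symmetric])
  also have "\<dots> = h ** (g ** g')" using mult.IH(1) by (simp add: matrix_mul_assoc)
  finally show ?case .
qed

lemma abelian_gen_grp:
  assumes "\<forall>s\<in>S. invertible s" "\<forall>s\<in>S. \<forall>t\<in>S. s ** t = t ** s"
  shows "abelian_set (gen_grp S)"
  unfolding abelian_set_def
proof (intro ballI)
  fix g h assume "g \<in> gen_grp S" "h \<in> gen_grp S"
  have "\<forall>s\<in>S. s ** h = h ** s"
  proof
    fix s assume "s \<in> S"
    have "\<forall>t\<in>S. t ** s = s ** t" using assms(2) \<open>s \<in> S\<close> by blast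
    then have "h ** s = s ** h"
      using gen_grp_commute[OF assms(1) _ \<open>h \<in> gen_grp S\<close>] by simp
    then show "s ** h = h ** s" by simp
  qed
  then show "g ** h = h ** g" using gen_grp_commute[OF assms(1) _ \<open>g \<in> gen_grp S\<close>] by simp
qed

lemma commute_of_commute_left_factor:
  fixes K A B :: "'a::semiring_1^'n^'n"
  assumes "invertible K" "K ** B = B ** K" "(K ** A) ** B = B ** (K ** A)"
  shows "A ** B = B ** A"
proof -
  have "K ** (A ** B) = B ** (K ** A)"
    using assms(3) by (simp add: matrix_mul_assoc)
  also have "\<dots> = K ** (B ** A)"
    using assms(2) by (simp add: matrix_mul_assoc)
  finally show ?thesis using matrix_left_cancel[OF assms(1)] by blast
qed

lemma rep_M_relations:
  assumes "rep_M n A B X Y"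
  shows "invertible A" "invertible B" "invertible X" "invertible Y"
    and "det A = 1" "det Y = 1"
    and "A ** A = mzpow B (2*n+1)"
    and "matrix_inv X ** Y ** X = matrix_inv Y"
    and "mzpow B (-n) ** A = matrix_inv Y"
    and "A ** A = matrix_inv Y ** (X ** X)"
  using assms unfolding rep_M_def SL2_def mzpow_2 by (auto simp: invertible_det_nz)

lemma rep_M_commute_of_scalar_fiber:
  assumes "rep_M n A B X Y" "A ** A = mat c"
  shows "A ** B = B ** A"
proof -
  note rel = rep_M_relations[OF assms(1)]
  have "c * c = 1"
    using rel(5) assms(2) det_mul[of A A] by (simp add: det_2 mat_def)
  then have "c \<noteq> 0" by auto
  have "X ** X = (Y ** matrix_inv Y) ** (X ** X)"
    using matrix_inv_right[OF rel(4)] by simp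
  also have "\<dots> = Y ** mat c"
    using rel(10) assms(2) by (simp add: matrix_mul_assoc)
  finally have "X ** Y = Y ** X"
    using commute_of_square_eq_scalar_mult \<open>c \<noteq> 0\<close> by blast
  then obtain d where "Y = mat d"
    using scalar_of_klein_bottle_relation[OF rel(3) rel(6) rel(8)] by blast
  then have "Y ** B = B ** Y" by (simp add: mat_commute)
  then have "matrix_inv Y ** B = B ** matrix_inv Y" by (rule matrix_inv_commute[OF rel(4)])
  then have "(mzpow B (-n) ** A) ** B = B ** (mzpow B (-n) ** A)" by (simp only: rel(9))
  then show ?thesis
    by (rule commute_of_commute_left_factor[OF invertible_mzpow[OF rel(2)] mzpow_commute[OF rel(2) refl]])
qed

lemma rep_M_commute_of_nonscalar_fiber:
  assumes "rep_M n A B X Y" "\<nexists>c. A ** A = mat c"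
  shows "A ** B = B ** A"
proof (rule commute_of_commute_nonscalar_2x2[OF assms(2)])
  show "A ** (A ** A) = (A ** A) ** A" by (simp add: matrix_mul_assoc)
  show "B ** (A ** A) = (A ** A) ** B"
    unfolding rep_M_relations(7)[OF assms(1)]
    using mzpow_commute[OF rep_M_relations(2)[OF assms(1)] refl] by simp
qed

theorem proposition3p4:
  fixes n :: int and A B X Y :: cmat2
  assumes "n \<noteq> 0" and "n \<noteq> -1"
    and "rep_M n A B X Y"
    and "irreducible_set (gen_grp {A, B, X, Y})"
  shows "abelian_set (gen_grp {A, B})"
proof -
  have "A ** B = B ** A"
    using rep_M_commute_of_scalar_fiber[OF assms(3)] rep_M_commute_of_nonscalar_fiber[OF assms(3)]
    by blast
  then show ?thesis
    using rep_M_relations(1,2)[OF assms(3)] by (intro abelian_gen_grp) auto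
qed

end
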